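(* The function $m\mapsto\bar\mu_\infty(m)$ is continuous, non-decreasing and strictly concave on $[0,\bar\pi]$.
   Context: $\lambda_L,\lambda_G,\gamma>0$; $\pi$ a probability distribution on $\mathbb N$ with mean $\bar\pi<\infty$. For constant $m\in[0,\bar\pi]$ the forced process solves $X_t(m) = X_0 + P_{inf}\big( \int_{0}^{t} [ \lambda_L X_s(m) + \lambda_G \frac{\nu}{\bar\pi}m ](1-\frac{X_s(m)}{\nu}) ds \big) - P_{rec}\big( \int_{0}^{t} \gamma X_s(m) ds \big)$ with $\nu\sim\pi$ and independent standard Poisson processes; $\mu_\infty(m)$ is the unique stationary distribution of $(\nu,X_t(m))$ with first marginal $\pi$, and $\bar\mu_\infty(m)=\sum_{(n,k)}k\,\mu_\infty(m)(\{(n,k)\})$ is its mean number of infected. *)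

theory Defs
  imports "HOL-Analysis.Analysis" "HOL-Probability.Probability"
begin

definition pibar :: "nat pmf \<Rightarrow> real" where
  "pibar p = measure_pmf.expectation p real"

text \<open>Infection (birth) rate of the forced process at state k, given nu = n and forcing m.\<close>
definition inf_rate :: "real \<Rightarrow> real \<Rightarrow> nat pmf \<Rightarrow> nat \<Rightarrow> real \<Rightarrow> nat \<Rightarrow> real" where
  "inf_rate lL lG p n m k =
     (lL * real k + lG * (real n / pibar p) * m) * (1 - real k / real n)"

definition rec_rate :: "real \<Rightarrow> nat \<Rightarrow> real" where
  "rec_rate g k = g * real k"

text \<open>Generator (Q-matrix) of the forced process X(m) given nu = n, on the states {0..n}.\<close>
definition gen :: "real \<Rightarrow> real \<Rightarrow> real \<Rightarrow> nat pmf \<Rightarrow> nat \<Rightarrow> real \<Rightarrow> nat \<Rightarrow> nat \<Rightarrow> real" where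
  "gen lL lG g p n m i j =
     (if j = i + 1 then inf_rate lL lG p n m i else 0)
   + (if j + 1 = i then rec_rate g i else 0)
   - (if j = i then inf_rate lL lG p n m i + rec_rate g i else 0)"

definition is_stationary ::
  "real \<Rightarrow> real \<Rightarrow> real \<Rightarrow> nat pmf \<Rightarrow> nat \<Rightarrow> real \<Rightarrow> (nat \<Rightarrow> real) \<Rightarrow> bool" where
  "is_stationary lL lG g p n m q \<longleftrightarrow>
     (\<forall>k. q k \<ge> 0) \<and> (\<forall>k>n. q k = 0) \<and> (\<Sum>k\<le>n. q k) = 1 \<and>
     (\<forall>j\<le>n. (\<Sum>i\<le>n. q i * gen lL lG g p n m i j) = 0)"

text \<open>The (unique) stationary distribution of X(m) conditioned on nu = n.\<close>
definition cond_stat :: "real \<Rightarrow> real \<Rightarrow> real \<Rightarrow> nat pmf \<Rightarrow> nat \<Rightarrow> real \<Rightarrow> nat \<Rightarrow> real" where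
  "cond_stat lL lG g p n m = (THE q. is_stationary lL lG g p n m q)"

text \<open>mu_infty(m)({(n,k)}): the stationary distribution of (nu, X(m)) with first marginal pi.\<close>
definition mu_inf :: "real \<Rightarrow> real \<Rightarrow> real \<Rightarrow> nat pmf \<Rightarrow> real \<Rightarrow> nat \<times> nat \<Rightarrow> real" where
  "mu_inf lL lG g p m nk = pmf p (fst nk) * cond_stat lL lG g p (fst nk) m (snd nk)"

definition mubar_inf :: "real \<Rightarrow> real \<Rightarrow> real \<Rightarrow> nat pmf \<Rightarrow> real \<Rightarrow> real" where
  "mubar_inf lL lG g p m = (\<Sum>\<^sub>\<infinity>nk\<in>UNIV. real (snd nk) * mu_inf lL lG g p m nk)"

definition strict_concave_on :: "real set \<Rightarrow> (real \<Rightarrow> real) \<Rightarrow> bool" where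
  "strict_concave_on S f \<longleftrightarrow> convex S \<and>
     (\<forall>x\<in>S. \<forall>y\<in>S. x \<noteq> y \<longrightarrow> (\<forall>t. 0 < t \<and> t < 1 \<longrightarrow>
        f ((1 - t) * x + t * y) > (1 - t) * f x + t * f y))"

end

theory Submission
  imports Defs
begin

(* Given nu = n, the forced process is a birth-death chain on {0..n} with birth rates
   g (n - k) (x + a k) and death rates g k, where x = lG m / (pibar g) is linear in m and
   a = lL / (n g). Detailed balance gives the stationary law q k ~ C(n,k) prod_{j<k} (x + a j);
   writing Z_N(x) = sum_k C(N,k) prod_{j<k} (x + a j), the conditional mean for n = N + 1 is
   (N + 1) (1 - R_N(x)) with R_N = Z_N / Z_(N+1). The three-term recurrence of Z_N turns R_N into
   a continued fraction, R_0(x) = 1 / (1 + x) and R_(N+1)(x) = 1 / (x + 1 + b - b R_N(x)) with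
   b = a (N + 1). The reciprocal of a positive, concave, strictly increasing function is strictly
   convex and strictly decreasing, so by induction every R_N is; hence every conditional mean is
   continuous, non-decreasing and strictly concave in m. Mixing over nu ~ pi preserves this, the
   series being dominated by sum_n pi(n) n < infinity. *)

section \<open>Strict convexity and series of functions\<close>

definition strict_convex_on :: "real set \<Rightarrow> (real \<Rightarrow> real) \<Rightarrow> bool" where
  "strict_convex_on S f \<longleftrightarrow> convex S \<and>
     (\<forall>x\<in>S. \<forall>y\<in>S. x \<noteq> y \<longrightarrow> (\<forall>t. 0 < t \<and> t < 1 \<longrightarrow>
        f ((1 - t) * x + t * y) < (1 - t) * f x + t * f y))"

lemma strict_convex_on_imp_convex_on: "strict_convex_on S f \<Longrightarrow> convex_on S f"
  unfolding strict_convex_on_def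
  by (intro convex_on_linorderI) (auto simp: less_imp_le)

lemma strict_concave_on_imp_concave_on: "strict_concave_on S f \<Longrightarrow> concave_on S f"
  unfolding strict_concave_on_def
  by (intro concave_on_linorderI) (auto simp: less_imp_le)

lemma reciprocal_convex_combination_less:
  fixes A B t :: real
  assumes "A > 0" "B > 0" "A \<noteq> B" "0 < t" "t < 1"
  shows "1 / ((1 - t) * A + t * B) < (1 - t) / A + t / B"
proof -
  have pos: "(1 - t) * A + t * B > 0"
    using assms by (intro add_pos_pos mult_pos_pos) auto
  have "(1 - t) / A + t / B - 1 / ((1 - t) * A + t * B)
      = t * (1 - t) * (A - B)\<^sup>2 / (A * B * ((1 - t) * A + t * B))"
    using assms pos by (simp add: field_simps power2_eq_square)
  also have "\<dots> > 0"
    using assms pos by (intro divide_pos_pos mult_pos_pos) auto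
  finally show ?thesis by simp
qed

lemma strict_convex_on_reciprocal:
  fixes u :: "real \<Rightarrow> real"
  assumes conc: "concave_on S u" and mono: "strict_mono_on S u"
    and pos: "\<And>x. x \<in> S \<Longrightarrow> u x > 0"
  shows "strict_convex_on S (\<lambda>x. 1 / u x)"
  unfolding strict_convex_on_def
proof (intro conjI ballI allI impI)
  show "convex S" using conc by (rule concave_on_imp_convex)
  fix x y t :: real assume xy: "x \<in> S" "y \<in> S" "x \<noteq> y" and t: "0 < t \<and> t < 1"
  let ?z = "(1 - t) * x + t * y"
  have "(1 - t) * u x + t * u y \<le> u ?z"
    using concave_onD [OF conc, of t x y] xy t by simp
  moreover have "(1 - t) * u x + t * u y > 0"
    using pos xy t by (intro add_pos_pos mult_pos_pos) auto
  ultimately have "1 / u ?z \<le> 1 / ((1 - t) * u x + t * u y)"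
    by (intro divide_left_mono mult_pos_pos) auto
  moreover have "u x \<noteq> u y"
    using strict_mono_on_imp_inj_on [OF mono] xy by (auto dest: inj_onD)
  then have "1 / ((1 - t) * u x + t * u y) < (1 - t) / u x + t / u y"
    using reciprocal_convex_combination_less pos xy t by blast
  ultimately show "1 / u ?z < (1 - t) * (1 / u x) + t * (1 / u y)"
    by simp
qed

lemma strict_antimono_on_reciprocal:
  fixes u :: "real \<Rightarrow> real"
  assumes "strict_mono_on S u" and "\<And>x. x \<in> S \<Longrightarrow> u x > 0"
  shows "strict_antimono_on S (\<lambda>x. 1 / u x)"
proof (intro monotone_onI)
  fix x y assume "x \<in> S" "y \<in> S" "x < y"
  then have "u x < u y" "u x > 0"
    using assms by (auto dest: monotone_onD)
  then show "1 / u y < 1 / u x"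
    by (simp add: frac_less2)
qed

lemma strict_convex_antimono_reciprocal:
  fixes R :: "real \<Rightarrow> real"
  assumes conv: "convex_on S R" and anti: "antimono_on S R" and b: "b \<ge> 0"
    and pos: "\<And>x. x \<in> S \<Longrightarrow> x + c - b * R x > 0"
  shows "strict_convex_on S (\<lambda>x. 1 / (x + c - b * R x)) \<and> strict_antimono_on S (\<lambda>x. 1 / (x + c - b * R x))"
proof -
  let ?u = "\<lambda>x. x + c - b * R x"
  have "concave_on S ?u"
    using convex_on_imp_convex [OF conv] convex_on_cmul [OF b conv]
    by (intro concave_on_diff concave_on_add) (simp_all add: concave_on_ident concave_on_const)
  moreover have "strict_mono_on S ?u"
  proof (intro monotone_onI)
    fix x y :: real assume "x \<in> S" "y \<in> S" "x < y"
    then have "b * R y \<le> b * R x"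
      using b by (intro mult_left_mono) (auto dest: monotone_onD [OF anti])
    then show "?u x < ?u y"
      using \<open>x < y\<close> by simp
  qed
  ultimately show ?thesis
    using pos by (simp add: strict_convex_on_reciprocal strict_antimono_on_reciprocal)
qed

lemma strict_concave_on_cmul:
  assumes c: "c > 0" and f: "strict_concave_on S f"
  shows "strict_concave_on S (\<lambda>x. c * f x)"
  unfolding strict_concave_on_def
proof (intro conjI ballI allI impI)
  show "convex S" using f by (simp add: strict_concave_on_def)
  fix x y t :: real assume "x \<in> S" "y \<in> S" "x \<noteq> y" "0 < t \<and> t < 1"
  then have "(1 - t) * f x + t * f y < f ((1 - t) * x + t * y)"
    using f by (simp add: strict_concave_on_def)
  from mult_strict_left_mono [OF this c]
  show "(1 - t) * (c * f x) + t * (c * f y) < c * f ((1 - t) * x + t * y)"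
    by (simp add: algebra_simps)
qed

lemma strict_concave_on_subset:
  "strict_concave_on S f \<Longrightarrow> T \<subseteq> S \<Longrightarrow> convex T \<Longrightarrow> strict_concave_on T f"
  unfolding strict_concave_on_def by blast

lemma strict_concave_on_cong:
  assumes "convex S" "\<And>x. x \<in> S \<Longrightarrow> f x = g x"
  shows "strict_concave_on S f \<longleftrightarrow> strict_concave_on S g"
proof -
  have "(1 - t) * x + t * y \<in> S" if "x \<in> S" "y \<in> S" "0 < t \<and> t < 1" for x y t :: real
    using assms(1) that unfolding convex_alt by simp
  then show ?thesis
    using assms unfolding strict_concave_on_def by auto
qed

lemma strict_concave_on_suminf:
  fixes f :: "nat \<Rightarrow> real \<Rightarrow> real"
  assumes conc: "\<And>n. concave_on S (f n)" and strict: "strict_concave_on S (f n\<^sub>0)"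
    and summ: "\<And>x. x \<in> S \<Longrightarrow> summable (\<lambda>n. f n x)"
  shows "strict_concave_on S (\<lambda>x. \<Sum>n. f n x)"
  unfolding strict_concave_on_def
proof (intro conjI ballI allI impI)
  show "convex S" using strict by (simp add: strict_concave_on_def)
  fix x y t :: real assume x: "x \<in> S" and y: "y \<in> S" and "x \<noteq> y" and t: "0 < t \<and> t < 1"
  define z where "z = (1 - t) * x + t * y"
  have z: "z \<in> S"
    using \<open>convex S\<close> x y t unfolding z_def convex_alt by simp
  define D where "D n = f n z - ((1 - t) * f n x + t * f n y)" for n
  have "D sums ((\<Sum>n. f n z) - ((1 - t) * (\<Sum>n. f n x) + t * (\<Sum>n. f n y)))"
    unfolding D_def by (intro sums_diff sums_add sums_mult summable_sums summ x y z)
  moreover have "D n \<ge> 0" for n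
    using concave_onD [OF conc, of t x y] x y t by (simp add: D_def z_def)
  moreover have "D n\<^sub>0 > 0"
    using strict x y t \<open>x \<noteq> y\<close> unfolding strict_concave_on_def D_def z_def by simp
  ultimately have "0 < (\<Sum>n. f n z) - ((1 - t) * (\<Sum>n. f n x) + t * (\<Sum>n. f n y))"
    by (metis suminf_pos2 sums_summable sums_unique)
  then show "(\<Sum>n. f n z) > (1 - t) * (\<Sum>n. f n x) + t * (\<Sum>n. f n y)"
    by simp
qed

lemma mono_on_suminf:
  fixes f :: "nat \<Rightarrow> real \<Rightarrow> real"
  assumes "\<And>n. mono_on S (f n)" and "\<And>x. x \<in> S \<Longrightarrow> summable (\<lambda>n. f n x)"
  shows "mono_on S (\<lambda>x. \<Sum>n. f n x)"
  using assms by (intro mono_onI suminf_le) (auto dest: monotone_onD)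

lemma continuous_on_suminf_dominated:
  fixes f :: "nat \<Rightarrow> real \<Rightarrow> real"
  assumes "\<And>n. continuous_on S (f n)" and "\<And>n x. x \<in> S \<Longrightarrow> norm (f n x) \<le> M n"
    and "summable M"
  shows "continuous_on S (\<lambda>x. \<Sum>n. f n x)"
proof (rule uniform_limit_theorem)
  show "uniform_limit S (\<lambda>N x. \<Sum>n<N. f n x) (\<lambda>x. \<Sum>n. f n x) sequentially"
    using assms(2,3) by (rule Weierstrass_m_test)
  show "\<forall>\<^sub>F N in sequentially. continuous_on S (\<lambda>x. \<Sum>n<N. f n x)"
    using assms(1) by (intro always_eventually allI continuous_on_sum) auto
qed simp

section \<open>The partition function of the product-form law\<close>

definition step_pochhammer :: "real \<Rightarrow> real \<Rightarrow> nat \<Rightarrow> real" where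
  "step_pochhammer a x k = (\<Prod>j<k. x + a * real j)"

lemma step_pochhammer_0 [simp]: "step_pochhammer a x 0 = 1"
  by (simp add: step_pochhammer_def)

lemma step_pochhammer_Suc:
  "step_pochhammer a x (Suc k) = step_pochhammer a x k * (x + a * real k)"
  by (simp add: step_pochhammer_def)

lemma step_pochhammer_Suc_shift: "step_pochhammer a x (Suc k) = x * step_pochhammer a (x + a) k"
  unfolding step_pochhammer_def prod.lessThan_Suc_shift by (simp add: algebra_simps)

lemma step_pochhammer_nonneg: "a \<ge> 0 \<Longrightarrow> x \<ge> 0 \<Longrightarrow> step_pochhammer a x k \<ge> 0"
  unfolding step_pochhammer_def by (intro prod_nonneg) auto

definition partition_fn :: "real \<Rightarrow> nat \<Rightarrow> real \<Rightarrow> real" where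
  "partition_fn a N x = (\<Sum>k\<le>N. real (N choose k) * step_pochhammer a x k)"

lemma partition_fn_0 [simp]: "partition_fn a 0 x = 1"
  by (simp add: partition_fn_def)

lemma partition_fn_ge_1: "a \<ge> 0 \<Longrightarrow> x \<ge> 0 \<Longrightarrow> partition_fn a N x \<ge> 1"
  unfolding partition_fn_def atMost_atLeast0
  by (subst sum.atLeast_Suc_atMost) (auto intro!: sum_nonneg mult_nonneg_nonneg step_pochhammer_nonneg)

lemma continuous_on_partition_fn: "continuous_on A (partition_fn a N)"
  unfolding partition_fn_def step_pochhammer_def by (intro continuous_intros)

lemma partition_fn_Suc:
  "partition_fn a (Suc N) x = partition_fn a N x + x * partition_fn a N (x + a)"
proof -
  have "partition_fn a (Suc N) x
      = 1 + (\<Sum>k\<le>N. real (N choose Suc k) * step_pochhammer a x (Suc k))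
          + (\<Sum>k\<le>N. real (N choose k) * step_pochhammer a x (Suc k))"
    unfolding partition_fn_def by (subst sum.atMost_Suc_shift) (simp add: sum.distrib algebra_simps)
  also have "1 + (\<Sum>k\<le>N. real (N choose Suc k) * step_pochhammer a x (Suc k)) = partition_fn a N x"
  proof -
    have "partition_fn a N x = (\<Sum>k\<le>Suc N. real (N choose k) * step_pochhammer a x k)"
      by (simp add: partition_fn_def)
    then show ?thesis
      unfolding sum.atMost_Suc_shift by simp
  qed
  finally show ?thesis
    by (simp add: partition_fn_def step_pochhammer_Suc_shift sum_distrib_left algebra_simps)
qed

lemma Suc_times_binomial_real:
  "real (Suc k) * real (Suc N choose Suc k) = real (Suc N) * real (N choose k)"
  by (metis Suc_times_binomial of_nat_mult)

lemma partition_fn_Suc_shift_diff: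
  "partition_fn a (Suc N) (x + a) - partition_fn a (Suc N) x
     = a * real (Suc N) * partition_fn a N (x + a)"
proof -
  have diff: "step_pochhammer a (x + a) (Suc k) - step_pochhammer a x (Suc k)
      = a * real (Suc k) * step_pochhammer a (x + a) k" for k
    unfolding step_pochhammer_Suc [of a "x + a"] step_pochhammer_Suc_shift [of a x]
    by (simp add: algebra_simps)
  have "partition_fn a (Suc N) (x + a) - partition_fn a (Suc N) x
      = (\<Sum>k\<le>N. real (Suc N choose Suc k)
                 * (step_pochhammer a (x + a) (Suc k) - step_pochhammer a x (Suc k)))"
    unfolding partition_fn_def
    by (subst (1 2) sum.atMost_Suc_shift) (simp add: sum_subtractf algebra_simps del: binomial_Suc_Suc)
  also have "\<dots> = (\<Sum>k\<le>N. a * real (Suc N) * (real (N choose k) * step_pochhammer a (x + a) k))"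
    unfolding diff using Suc_times_binomial_real
    by (intro sum.cong refl) (metis mult.commute mult.left_commute)
  finally show ?thesis
    by (simp add: partition_fn_def sum_distrib_left)
qed

lemma partition_fn_three_term:
  "partition_fn a (Suc (Suc N)) x
     = (x + 1 + a * real (Suc N)) * partition_fn a (Suc N) x - a * real (Suc N) * partition_fn a N x"
proof -
  have "partition_fn a (Suc (Suc N)) x
      = partition_fn a (Suc N) x + x * partition_fn a (Suc N) (x + a)"
    by (rule partition_fn_Suc)
  also have "partition_fn a (Suc N) (x + a)
      = partition_fn a (Suc N) x + a * real (Suc N) * partition_fn a N (x + a)"
    using partition_fn_Suc_shift_diff [of a N x] by simp
  also have "partition_fn a (Suc N) x
        + x * (partition_fn a (Suc N) x + a * real (Suc N) * partition_fn a N (x + a))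
      = (1 + x) * partition_fn a (Suc N) x + a * real (Suc N) * (x * partition_fn a N (x + a))"
    by (simp add: algebra_simps)
  also have "x * partition_fn a N (x + a) = partition_fn a (Suc N) x - partition_fn a N x"
    by (simp add: partition_fn_Suc)
  finally show ?thesis
    by (simp add: algebra_simps)
qed

lemma partition_fn_moment:
  "(\<Sum>k\<le>Suc N. real k * (real (Suc N choose k) * step_pochhammer a x k))
     = real (Suc N) * x * partition_fn a N (x + a)"
proof -
  have "(\<Sum>k\<le>Suc N. real k * (real (Suc N choose k) * step_pochhammer a x k))
     = (\<Sum>k\<le>N. real (Suc k) * real (Suc N choose Suc k) * step_pochhammer a x (Suc k))"
    by (subst sum.atMost_Suc_shift) (simp add: mult.assoc)
  also have "\<dots> = (\<Sum>k\<le>N. real (Suc N) * x * (real (N choose k) * step_pochhammer a (x + a) k))"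
    unfolding Suc_times_binomial_real step_pochhammer_Suc_shift by (simp add: algebra_simps)
  finally show ?thesis
    by (simp add: partition_fn_def sum_distrib_left)
qed

definition partition_ratio :: "real \<Rightarrow> nat \<Rightarrow> real \<Rightarrow> real" where
  "partition_ratio a N x = partition_fn a N x / partition_fn a (Suc N) x"

lemma partition_ratio_0: "partition_ratio a 0 x = 1 / (x + 1)"
  using partition_fn_Suc [of a 0 x] by (simp add: partition_ratio_def add.commute)

lemma partition_ratio_Suc:
  assumes "a \<ge> 0" "x \<ge> 0"
  shows "partition_ratio a (Suc N) x
           = 1 / (x + (1 + a * real (Suc N)) - a * real (Suc N) * partition_ratio a N x)"
proof -
  have "partition_fn a (Suc N) x \<noteq> 0"
    using partition_fn_ge_1 [OF assms] by (metis not_one_le_zero)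
  then show ?thesis
    unfolding partition_ratio_def partition_fn_three_term by (simp add: field_simps)
qed

lemma partition_ratio_pos: "a \<ge> 0 \<Longrightarrow> x \<ge> 0 \<Longrightarrow> partition_ratio a N x > 0"
  unfolding partition_ratio_def using partition_fn_ge_1 by (smt (verit) divide_pos_pos)

lemma continuous_on_partition_ratio: "a \<ge> 0 \<Longrightarrow> continuous_on {0..} (partition_ratio a N)"
  unfolding partition_ratio_def
  by (intro continuous_intros continuous_on_partition_fn) (smt (verit) atLeast_iff partition_fn_ge_1)

lemma partition_ratio_strict_convex_antimono:
  assumes a: "a \<ge> 0"
  shows "strict_convex_on {0..} (partition_ratio a N) \<and> strict_antimono_on {0..} (partition_ratio a N)"
proof (induction N)
  case 0
  have "strict_convex_on {0..} (\<lambda>x. 1 / (x + 1)) \<and> strict_antimono_on {0..} (\<lambda>x::real. 1 / (x + 1))"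
    using strict_convex_antimono_reciprocal [of "{0..}" "\<lambda>_. 0" 0 1]
    by (simp add: convex_on_const monotone_on_def)
  then show ?case
    unfolding partition_ratio_0 [abs_def] .
next
  case (Suc N)
  define b where "b = a * real (Suc N)"
  let ?u = "\<lambda>x. x + (1 + b) - b * partition_ratio a N x"
  have ratio: "partition_ratio a (Suc N) x = 1 / ?u x" if "x \<in> {0..}" for x
    using partition_ratio_Suc [OF a, of x N] that by (simp add: b_def)
  have "?u x > 0" if "x \<in> {0..}" for x
    using partition_ratio_pos [OF a, of x "Suc N"] ratio that by (simp add: zero_less_divide_iff)
  then have "strict_convex_on {0..} (\<lambda>x. 1 / ?u x) \<and> strict_antimono_on {0..} (\<lambda>x. 1 / ?u x)"
    using Suc.IH a strict_antimono_iff_antimono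
    by (intro strict_convex_antimono_reciprocal strict_convex_on_imp_convex_on) (auto simp: b_def)
  then show ?case
    using ratio unfolding strict_convex_on_def monotone_on_def by simp
qed

section \<open>Stationary laws of birth-death chains\<close>

definition birth_death_gen :: "(nat \<Rightarrow> real) \<Rightarrow> (nat \<Rightarrow> real) \<Rightarrow> nat \<Rightarrow> nat \<Rightarrow> real" where
  "birth_death_gen b d i j =
     (if j = i + 1 then b i else 0) + (if j + 1 = i then d i else 0) - (if j = i then b i + d i else 0)"

lemma gen_eq_birth_death_gen: "gen lL lG g p n m = birth_death_gen (inf_rate lL lG p n m) (rec_rate g)"
  by (simp add: fun_eq_iff gen_def birth_death_gen_def)

lemma birth_death_gen_column:
  fixes q b d :: "nat \<Rightarrow> real"
  assumes "j \<le> n" "q (Suc n) = 0" "d 0 = 0"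
  defines "F k \<equiv> q k * b k - q (Suc k) * d (Suc k)"
  shows "(\<Sum>i\<le>n. q i * birth_death_gen b d i j) = (if j = 0 then 0 else F (j - 1)) - F j"
proof -
  have "(\<Sum>i\<le>n. q i * birth_death_gen b d i j)
      = (\<Sum>i\<le>n. if i + 1 = j then q i * b i else 0) + (\<Sum>i\<le>n. if i = j + 1 then q i * d i else 0)
        - (\<Sum>i\<le>n. if i = j then q i * (b i + d i) else 0)"
    unfolding sum_subtractf [symmetric] sum.distrib [symmetric] birth_death_gen_def
    by (intro sum.cong) (auto simp: algebra_simps)
  also have "(\<Sum>i\<le>n. if i + 1 = j then q i * b i else 0) = (if j = 0 then 0 else q (j - 1) * b (j - 1))"
    using assms(1) by (cases j) (simp_all add: sum.delta)
  also have "(\<Sum>i\<le>n. if i = j + 1 then q i * d i else 0) = q (Suc j) * d (Suc j)"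
    using assms(1,2) by (cases "j = n") (auto simp: sum.delta)
  also have "(\<Sum>i\<le>n. if i = j then q i * (b i + d i) else 0) = q j * (b j + d j)"
    using assms(1) by (simp add: sum.delta algebra_simps)
  finally show ?thesis
    using assms(3) by (cases j) (auto simp: F_def algebra_simps)
qed

lemma birth_death_stationary_iff_balance:
  fixes q b d :: "nat \<Rightarrow> real"
  assumes "q (Suc n) = 0" "d 0 = 0" "b n = 0"
  shows "(\<forall>j\<le>n. (\<Sum>i\<le>n. q i * birth_death_gen b d i j) = 0)
     \<longleftrightarrow> (\<forall>k<n. q (Suc k) * d (Suc k) = q k * b k)"
proof -
  define F where "F k = q k * b k - q (Suc k) * d (Suc k)" for k
  have column: "(\<Sum>i\<le>n. q i * birth_death_gen b d i j) = (if j = 0 then 0 else F (j - 1)) - F j"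
    if "j \<le> n" for j
    unfolding F_def using birth_death_gen_column [of j n q d b, OF that assms(1,2)] .
  have "F n = 0" using assms by (simp add: F_def)
  then have "(\<forall>j\<le>n. (if j = 0 then 0 else F (j - 1)) - F j = 0) \<longleftrightarrow> (\<forall>k<n. F k = 0)"
  proof (intro iffI allI impI)
    fix k assume zero: "\<forall>j\<le>n. (if j = 0 then 0 else F (j - 1)) - F j = 0" and "k < n"
    then show "F k = 0"
    proof (induction k)
      case 0
      then show ?case by auto
    next
      case (Suc k)
      then show ?case using zero [rule_format, of "Suc k"] by simp
    qed
  next
    fix j assume "\<forall>k<n. F k = 0" "F n = 0" "j \<le> n"
    then show "(if j = 0 then 0 else F (j - 1)) - F j = 0"
      by (cases "j = n") auto
  qed
  moreover have "(\<forall>k<n. F k = 0) \<longleftrightarrow> (\<forall>k<n. q (Suc k) * d (Suc k) = q k * b k)"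
    by (auto simp: F_def)
  ultimately show ?thesis
    using column by simp
qed

lemma is_stationary_iff_balance:
  "is_stationary lL lG g p n m q \<longleftrightarrow>
     (\<forall>k. q k \<ge> 0) \<and> (\<forall>k>n. q k = 0) \<and> (\<Sum>k\<le>n. q k) = 1 \<and>
     (\<forall>k<n. q (Suc k) * rec_rate g (Suc k) = q k * inf_rate lL lG p n m k)"
proof (cases "\<forall>k>n. q k = 0")
  case True
  have "inf_rate lL lG p n m n = 0" by (cases "n = 0") (auto simp: inf_rate_def)
  moreover have "rec_rate g 0 = 0" by (simp add: rec_rate_def)
  ultimately show ?thesis
    unfolding is_stationary_def gen_eq_birth_death_gen
    using True birth_death_stationary_iff_balance [of q n] by auto
qed (auto simp: is_stationary_def)

section \<open>The stationary law of the forced process\<close>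

definition ext_pressure :: "real \<Rightarrow> real \<Rightarrow> nat pmf \<Rightarrow> real \<Rightarrow> real" where
  "ext_pressure lG g p m = lG / (pibar p * g) * m"

definition int_pressure :: "real \<Rightarrow> real \<Rightarrow> nat \<Rightarrow> real" where
  "int_pressure lL g n = lL / (real n * g)"

lemma pibar_nonneg: "pibar p \<ge> 0"
  unfolding pibar_def by (rule integral_nonneg_AE) auto

lemma ext_pressure_nonneg: "lG \<ge> 0 \<Longrightarrow> g > 0 \<Longrightarrow> m \<ge> 0 \<Longrightarrow> ext_pressure lG g p m \<ge> 0"
  unfolding ext_pressure_def using pibar_nonneg [of p] by simp

lemma int_pressure_nonneg: "lL \<ge> 0 \<Longrightarrow> g > 0 \<Longrightarrow> int_pressure lL g n \<ge> 0"
  unfolding int_pressure_def by simp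

lemma inf_rate_factor:
  assumes "k < n" "g > 0"
  shows "inf_rate lL lG p n m k
     = g * (real n - real k) * (ext_pressure lG g p m + int_pressure lL g n * real k)"
proof -
  \<comment> \<open>if pibar p = 0 both sides use x / 0 = 0\<close>
  have "lG * (real n / pibar p) * m = real n * (g * ext_pressure lG g p m)"
    unfolding ext_pressure_def using assms(2) by (cases "pibar p = 0") (simp_all add: field_simps)
  moreover have "g * int_pressure lL g n = lL / real n"
    unfolding int_pressure_def using assms(2) by simp
  ultimately show ?thesis
    unfolding inf_rate_def using assms(1) by (simp add: field_simps)
qed

lemma binomial_inf_rate:
  assumes "k < n" "g > 0"
  shows "real (n choose k) * inf_rate lL lG p n m k
     = rec_rate g (Suc k) * real (n choose Suc k) * (ext_pressure lG g p m + int_pressure lL g n * real k)"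
proof -
  let ?P = "ext_pressure lG g p m + int_pressure lL g n * real k"
  have absorb: "real (Suc k) * real (n choose Suc k) = (real n - real k) * real (n choose k)"
    using binomial_absorb_comp [of n k] binomial_absorption [of k n] assms(1)
    by (metis of_nat_diff of_nat_mult less_imp_le)
  have "rec_rate g (Suc k) * real (n choose Suc k) * ?P = g * (real (Suc k) * real (n choose Suc k)) * ?P"
    by (simp add: rec_rate_def)
  also have "\<dots> = real (n choose k) * inf_rate lL lG p n m k"
    unfolding absorb inf_rate_factor [OF assms] by simp
  finally show ?thesis ..
qed

definition product_form_law :: "real \<Rightarrow> real \<Rightarrow> nat \<Rightarrow> nat \<Rightarrow> real" where
  "product_form_law a x n k =
     (if k \<le> n then real (n choose k) * step_pochhammer a x k / partition_fn a n x else 0)"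

lemma product_form_law_mean:
  assumes "a \<ge> 0" "x \<ge> 0"
  shows "(\<Sum>k\<le>Suc N. real k * product_form_law a x (Suc N) k) = real (Suc N) * (1 - partition_ratio a N x)"
proof -
  have Z: "partition_fn a (Suc N) x \<ge> 1" using partition_fn_ge_1 [OF assms] .
  have "(\<Sum>k\<le>Suc N. real k * product_form_law a x (Suc N) k)
      = (\<Sum>k\<le>Suc N. real k * (real (Suc N choose k) * step_pochhammer a x k)) / partition_fn a (Suc N) x"
    unfolding product_form_law_def sum_divide_distrib by (intro sum.cong) auto
  also have "\<dots> = real (Suc N) * (partition_fn a (Suc N) x - partition_fn a N x) / partition_fn a (Suc N) x"
    unfolding partition_fn_moment by (simp add: partition_fn_Suc [of a N x])
  also have "\<dots> = real (Suc N) * (1 - partition_ratio a N x)"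
    unfolding partition_ratio_def using Z by (simp add: field_simps)
  finally show ?thesis .
qed

definition cond_mean :: "real \<Rightarrow> real \<Rightarrow> real \<Rightarrow> nat pmf \<Rightarrow> nat \<Rightarrow> real \<Rightarrow> real" where
  "cond_mean lL lG g p n m = (\<Sum>k\<le>n. real k * cond_stat lL lG g p n m k)"

lemma cond_mean_0 [simp]: "cond_mean lL lG g p 0 m = 0"
  by (simp add: cond_mean_def)

context
  fixes lL lG g :: real and p :: "nat pmf"
  assumes lL: "lL \<ge> 0" and lG: "lG \<ge> 0" and g: "g > 0"
begin

lemma is_stationary_product_form:
  fixes n :: nat and m :: real
  assumes m: "m \<ge> 0"
  defines "a \<equiv> int_pressure lL g n" and "x \<equiv> ext_pressure lG g p m"
  shows "is_stationary lL lG g p n m (product_form_law a x n)"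
proof -
  have a: "a \<ge> 0" and x: "x \<ge> 0"
    unfolding a_def x_def using lL lG g m by (simp_all add: int_pressure_nonneg ext_pressure_nonneg)
  have Z: "partition_fn a n x \<ge> 1" using partition_fn_ge_1 [OF a x] .
  have "product_form_law a x n (Suc k) * rec_rate g (Suc k)
      = product_form_law a x n k * inf_rate lL lG p n m k" if "k < n" for k
  proof -
    have "product_form_law a x n (Suc k) * rec_rate g (Suc k)
        = step_pochhammer a x k * (rec_rate g (Suc k) * real (n choose Suc k) * (x + a * real k))
          / partition_fn a n x"
      using that unfolding product_form_law_def by (simp add: step_pochhammer_Suc mult_ac)
    also have "\<dots> = step_pochhammer a x k * (real (n choose k) * inf_rate lL lG p n m k) / partition_fn a n x"
      unfolding a_def x_def binomial_inf_rate [OF that g] ..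
    also have "\<dots> = product_form_law a x n k * inf_rate lL lG p n m k"
      using that unfolding product_form_law_def by simp
    finally show ?thesis .
  qed
  moreover have "product_form_law a x n k \<ge> 0" for k
    unfolding product_form_law_def using Z step_pochhammer_nonneg [OF a x] by simp
  moreover have "(\<Sum>k\<le>n. product_form_law a x n k) = 1"
    unfolding product_form_law_def using Z by (simp add: sum_divide_distrib [symmetric] partition_fn_def)
  ultimately show ?thesis
    unfolding is_stationary_iff_balance by (simp add: product_form_law_def)
qed

lemma balance_imp_product_shape:
  fixes n :: nat and m :: real and q :: "nat \<Rightarrow> real"
  assumes balance: "\<And>k. k < n \<Longrightarrow> q (Suc k) * rec_rate g (Suc k) = q k * inf_rate lL lG p n m k"
    and "k \<le> n"
  defines "a \<equiv> int_pressure lL g n" and "x \<equiv> ext_pressure lG g p m"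
  shows "q k = q 0 * (real (n choose k) * step_pochhammer a x k)"
  using \<open>k \<le> n\<close>
proof (induction k)
  case 0
  then show ?case by simp
next
  case (Suc k)
  then have k: "k < n" by simp
  have "q (Suc k) * rec_rate g (Suc k) = q k * inf_rate lL lG p n m k"
    by (rule balance [OF k])
  also have "\<dots> = q 0 * step_pochhammer a x k * (real (n choose k) * inf_rate lL lG p n m k)"
    using Suc k by (simp add: mult_ac)
  also have "\<dots> = q 0 * (real (n choose Suc k) * step_pochhammer a x (Suc k)) * rec_rate g (Suc k)"
    unfolding a_def x_def binomial_inf_rate [OF k g] step_pochhammer_Suc by (simp only: mult_ac)
  finally show ?case
    using g by (simp add: rec_rate_def)
qed

lemma is_stationary_imp_product_form:
  fixes n :: nat and m :: real and q :: "nat \<Rightarrow> real"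
  assumes m: "m \<ge> 0" and st: "is_stationary lL lG g p n m q"
  defines "a \<equiv> int_pressure lL g n" and "x \<equiv> ext_pressure lG g p m"
  shows "q = product_form_law a x n"
proof -
  have a: "a \<ge> 0" and x: "x \<ge> 0"
    unfolding a_def x_def using lL lG g m by (simp_all add: int_pressure_nonneg ext_pressure_nonneg)
  have zero: "\<forall>k>n. q k = 0" and sum: "(\<Sum>k\<le>n. q k) = 1"
    and balance: "\<And>k. k < n \<Longrightarrow> q (Suc k) * rec_rate g (Suc k) = q k * inf_rate lL lG p n m k"
    using st unfolding is_stationary_iff_balance by auto
  note shape = balance_imp_product_shape [OF balance, folded a_def x_def]
  have "1 = (\<Sum>k\<le>n. q 0 * (real (n choose k) * step_pochhammer a x k))"
    unfolding sum [symmetric] by (rule sum.cong) (auto intro: shape)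
  also have "\<dots> = q 0 * partition_fn a n x"
    by (simp add: partition_fn_def sum_distrib_left)
  finally have q0: "q 0 = 1 / partition_fn a n x"
    using partition_fn_ge_1 [OF a x, of n] by (simp add: field_simps)
  show ?thesis
  proof
    fix k
    show "q k = product_form_law a x n k"
      using shape [of k] zero q0 by (cases "k \<le> n") (simp_all add: product_form_law_def)
  qed
qed

lemma cond_stat_eq_product_form:
  "m \<ge> 0 \<Longrightarrow> cond_stat lL lG g p n m = product_form_law (int_pressure lL g n) (ext_pressure lG g p m) n"
  unfolding cond_stat_def
  by (intro the_equality is_stationary_product_form is_stationary_imp_product_form)

lemma cond_mean_bounds:
  assumes "m \<ge> 0"
  shows "0 \<le> cond_mean lL lG g p n m" "cond_mean lL lG g p n m \<le> real n"
proof -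
  have "is_stationary lL lG g p n m (cond_stat lL lG g p n m)"
    using is_stationary_product_form cond_stat_eq_product_form assms by simp
  then have nonneg: "\<And>k. cond_stat lL lG g p n m k \<ge> 0"
    and sum: "(\<Sum>k\<le>n. cond_stat lL lG g p n m k) = 1"
    unfolding is_stationary_def by auto
  show "0 \<le> cond_mean lL lG g p n m"
    unfolding cond_mean_def using nonneg by (intro sum_nonneg) simp
  have "cond_mean lL lG g p n m \<le> (\<Sum>k\<le>n. real n * cond_stat lL lG g p n m k)"
    unfolding cond_mean_def using nonneg by (intro sum_mono mult_right_mono) auto
  also have "\<dots> = real n"
    using sum by (simp add: sum_distrib_left [symmetric])
  finally show "cond_mean lL lG g p n m \<le> real n" .
qed

lemma cond_mean_Suc:
  assumes "m \<ge> 0"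
  shows "cond_mean lL lG g p (Suc N) m
           = real (Suc N) * (1 - partition_ratio (int_pressure lL g (Suc N)) N (ext_pressure lG g p m))"
  unfolding cond_mean_def cond_stat_eq_product_form [OF assms]
  using lL lG g assms by (intro product_form_law_mean int_pressure_nonneg ext_pressure_nonneg)


lemma continuous_on_cond_mean: "continuous_on {0..} (cond_mean lL lG g p n)"
proof (cases n)
  case 0
  then show ?thesis by simp
next
  case (Suc N)
  define a where "a = int_pressure lL g (Suc N)"
  define c where "c = lG / (pibar p * g)"
  have a: "a \<ge> 0" and c: "c \<ge> 0"
    unfolding a_def c_def using lL lG g pibar_nonneg [of p] by (simp_all add: int_pressure_nonneg)
  have "continuous_on {0..} (\<lambda>m. real (Suc N) * (1 - partition_ratio a N (c * m)))"
    using c by (intro continuous_intros continuous_on_compose2 [OF continuous_on_partition_ratio [OF a]]) auto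
  then show ?thesis
    by (rule continuous_on_eq) (simp add: Suc cond_mean_Suc a_def c_def ext_pressure_def)
qed

lemma mono_on_cond_mean: "mono_on {0..} (cond_mean lL lG g p n)"
proof (cases n)
  case 0
  then show ?thesis by (simp add: monotone_on_def)
next
  case (Suc N)
  define a where "a = int_pressure lL g (Suc N)"
  define c where "c = lG / (pibar p * g)"
  have a: "a \<ge> 0" and c: "c \<ge> 0"
    unfolding a_def c_def using lL lG g pibar_nonneg [of p] by (simp_all add: int_pressure_nonneg)
  have anti: "antimono_on {0..} (partition_ratio a N)"
    using partition_ratio_strict_convex_antimono [OF a] strict_antimono_iff_antimono by blast
  show ?thesis
  proof (rule mono_onI)
    fix x y :: real assume "x \<in> {0..}" "y \<in> {0..}" "x \<le> y"
    with c have "partition_ratio a N (c * y) \<le> partition_ratio a N (c * x)"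
      by (intro monotone_onD [OF anti]) (auto intro: mult_left_mono)
    then show "cond_mean lL lG g p n x \<le> cond_mean lL lG g p n y"
      using \<open>x \<in> {0..}\<close> \<open>y \<in> {0..}\<close>
      by (simp add: Suc cond_mean_Suc a_def c_def ext_pressure_def)
  qed
qed

lemma strict_concave_on_cond_mean:
  assumes "lG > 0" "pibar p > 0"
  shows "strict_concave_on {0..} (cond_mean lL lG g p (Suc N))"
  unfolding strict_concave_on_def
proof (intro conjI ballI allI impI)
  show "convex {0::real..}" by (rule convex_real_interval)
  define a where "a = int_pressure lL g (Suc N)"
  define c where "c = lG / (pibar p * g)"
  let ?R = "partition_ratio a N"
  have a: "a \<ge> 0" and c: "c > 0"
    unfolding a_def c_def using lL assms g by (simp_all add: int_pressure_nonneg)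
  have mean: "cond_mean lL lG g p (Suc N) m = real (Suc N) * (1 - ?R (c * m))" if "m \<ge> 0" for m
    using cond_mean_Suc [OF that] by (simp add: a_def c_def ext_pressure_def)
  fix x y t :: real assume x: "x \<in> {0..}" and y: "y \<in> {0..}" and "x \<noteq> y" and t: "0 < t \<and> t < 1"
  define z where "z = (1 - t) * x + t * y"
  have "c * z = (1 - t) * (c * x) + t * (c * y)"
    by (simp add: z_def algebra_simps)
  then have "?R (c * z) < (1 - t) * ?R (c * x) + t * ?R (c * y)"
    using partition_ratio_strict_convex_antimono [OF a] c x y t \<open>x \<noteq> y\<close>
    unfolding strict_convex_on_def by simp
  then have "real (Suc N) * (1 - ((1 - t) * ?R (c * x) + t * ?R (c * y)))
      < real (Suc N) * (1 - ?R (c * z))"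
    by (intro mult_strict_left_mono) auto
  moreover have "z \<ge> 0"
    using x y t by (simp add: z_def)
  ultimately show "cond_mean lL lG g p (Suc N) z
      > (1 - t) * cond_mean lL lG g p (Suc N) x + t * cond_mean lL lG g p (Suc N) y"
    using x y by (simp add: mean algebra_simps)
qed

end

section \<open>Mixing over the degree distribution\<close>

lemma summable_pmf_times_of_nat:
  "integrable (measure_pmf p) real \<Longrightarrow> summable (\<lambda>n. pmf p n * real n)"
  by (simp add: measure_pmf_eq_density integrable_density integrable_count_space_nat_iff)

lemma pibar_pos_imp_pmf_pos:
  assumes "pibar p > 0"
  shows "\<exists>n. pmf p (Suc n) > 0"
proof (rule ccontr)
  assume "\<nexists>n. pmf p (Suc n) > 0"
  then have "set_pmf p \<subseteq> {0}"
    by (auto simp: set_pmf_eq') (metis not0_implies_Suc)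
  have "pibar p = (\<Sum>n\<in>{0}. pmf p n *\<^sub>R real n)"
    unfolding pibar_def by (rule integral_measure_pmf) (use \<open>set_pmf p \<subseteq> {0}\<close> in auto)
  with assms show False by simp
qed

context
  fixes lL lG g :: real and p :: "nat pmf"
  assumes lL: "lL \<ge> 0" and lG: "lG \<ge> 0" and g: "g > 0"
    and integrable: "integrable (measure_pmf p) real"
begin

lemma pmf_times_cond_mean_bounded:
  assumes "m \<ge> 0"
  shows "norm (pmf p n * cond_mean lL lG g p n m) \<le> pmf p n * real n"
  using cond_mean_bounds [OF lL lG g assms, where p = p and n = n]
  by (simp add: abs_mult mult_left_mono)

lemma summable_pmf_times_cond_mean: "m \<ge> 0 \<Longrightarrow> summable (\<lambda>n. pmf p n * cond_mean lL lG g p n m)"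
  using summable_pmf_times_of_nat [OF integrable]
  by (rule summable_comparison_test' [OF _ pmf_times_cond_mean_bounded])

lemma mubar_inf_eq_suminf:
  assumes m: "m \<ge> 0"
  shows "mubar_inf lL lG g p m = (\<Sum>n. pmf p n * cond_mean lL lG g p n m)"
proof -
  define f where "f nk = real (snd nk) * mu_inf lL lG g p m nk" for nk
  have law: "cond_stat lL lG g p n m = product_form_law (int_pressure lL g n) (ext_pressure lG g p m) n" for n
    using cond_stat_eq_product_form [OF lL lG g m] .
  have rows: "((\<lambda>k. f (n, k)) has_sum (pmf p n * cond_mean lL lG g p n m)) UNIV" for n
    by (intro has_sum_finite_neutralI [of "{..n}"])
       (auto simp: f_def mu_inf_def cond_mean_def law product_form_law_def sum_distrib_left mult_ac)
  have "f (n, k) \<ge> 0" for n k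
    using is_stationary_product_form [OF lL lG g m] unfolding is_stationary_def
    by (simp add: f_def mu_inf_def law)
  moreover have "(\<lambda>n. pmf p n * cond_mean lL lG g p n m) summable_on UNIV"
    using summable_pmf_times_cond_mean [OF m] cond_mean_bounds [OF lL lG g m]
    by (intro summable_nonneg_imp_summable_on) auto
  ultimately have summable: "f summable_on UNIV \<times> UNIV"
    using rows by (intro summable_on_SigmaI) auto
  have "mubar_inf lL lG g p m = (\<Sum>\<^sub>\<infinity>nk\<in>UNIV \<times> UNIV. f nk)"
    unfolding mubar_inf_def f_def by simp
  also have "\<dots> = (\<Sum>\<^sub>\<infinity>n. \<Sum>\<^sub>\<infinity>k. f (n, k))"
    using summable by (rule infsum_Sigma_banach [symmetric])
  also have "\<dots> = (\<Sum>\<^sub>\<infinity>n. pmf p n * cond_mean lL lG g p n m)"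
    using rows by (intro infsum_cong infsumI)
  also have "\<dots> = (\<Sum>n. pmf p n * cond_mean lL lG g p n m)"
    using summable_pmf_times_cond_mean [OF m] cond_mean_bounds [OF lL lG g m]
    by (intro infsumI sums_nonneg_imp_has_sum summable_sums) auto
  finally show ?thesis .
qed

lemma continuous_on_mubar_inf: "continuous_on {0..} (mubar_inf lL lG g p)"
proof -
  have "continuous_on {0..} (\<lambda>m. \<Sum>n. pmf p n * cond_mean lL lG g p n m)"
    using continuous_on_cond_mean [OF lL lG g] pmf_times_cond_mean_bounded
      summable_pmf_times_of_nat [OF integrable]
    by (intro continuous_on_suminf_dominated continuous_intros) auto
  then show ?thesis
    by (rule continuous_on_eq) (simp add: mubar_inf_eq_suminf)
qed

lemma mono_on_mubar_inf: "mono_on {0..} (mubar_inf lL lG g p)"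
proof -
  have "mono_on {0..} (\<lambda>m. \<Sum>n. pmf p n * cond_mean lL lG g p n m)"
    using mono_on_cond_mean [OF lL lG g] summable_pmf_times_cond_mean
    by (intro mono_on_suminf) (auto simp: monotone_on_def intro: mult_left_mono)
  then show ?thesis
    by (simp add: monotone_on_def mubar_inf_eq_suminf)
qed

lemma strict_concave_on_mubar_inf:
  assumes "lG > 0" and "pibar p > 0"
  shows "strict_concave_on {0..} (mubar_inf lL lG g p)"
proof -
  obtain n where n: "pmf p (Suc n) > 0"
    using pibar_pos_imp_pmf_pos [OF assms(2)] by blast
  have strict: "strict_concave_on {0..} (cond_mean lL lG g p (Suc N))" for N
    using strict_concave_on_cond_mean [OF lL lG g assms] .
  have "concave_on {0..} (\<lambda>m. pmf p k * cond_mean lL lG g p k m)" for k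
  proof (cases k)
    case 0
    then show ?thesis by (simp add: concave_on_const)
  next
    case (Suc N)
    then show ?thesis
      using strict_concave_on_imp_concave_on [OF strict] by (intro concave_on_cmul) auto
  qed
  then have "strict_concave_on {0..} (\<lambda>m. \<Sum>k. pmf p k * cond_mean lL lG g p k m)"
    using strict_concave_on_cmul [OF n strict] summable_pmf_times_cond_mean
    by (intro strict_concave_on_suminf) auto
  then show ?thesis
    by (subst strict_concave_on_cong) (simp_all add: mubar_inf_eq_suminf)
qed

end

theorem lemma7p3:
  fixes lL lG g :: real and p :: "nat pmf"
  assumes "lL > 0" and "lG > 0" and "g > 0"
    and "integrable (measure_pmf p) real"
  shows "continuous_on {0..pibar p} (mubar_inf lL lG g p)
       \<and> mono_on {0..pibar p} (mubar_inf lL lG g p)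
       \<and> strict_concave_on {0..pibar p} (mubar_inf lL lG g p)"
proof -
  have rates: "lL \<ge> 0" "lG \<ge> 0" "g > 0" "integrable (measure_pmf p) real"
    using assms by simp_all
  have "continuous_on {0..pibar p} (mubar_inf lL lG g p)"
    using continuous_on_mubar_inf [OF rates] by (rule continuous_on_subset) auto
  moreover have "mono_on {0..pibar p} (mubar_inf lL lG g p)"
    using mono_on_mubar_inf [OF rates] by (rule mono_on_subset) auto
  moreover have "strict_concave_on {0..pibar p} (mubar_inf lL lG g p)"
  proof (cases "pibar p = 0")
    case True
    then show ?thesis by (simp add: strict_concave_on_def)
  next
    case False
    with pibar_nonneg [of p] have "strict_concave_on {0..} (mubar_inf lL lG g p)"
      using strict_concave_on_mubar_inf [OF rates assms(2)] by simp
    then show ?thesis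
      by (rule strict_concave_on_subset) auto
  qed
  ultimately show ?thesis by blast
qed

end
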